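(* Let $\tilde{I} \approx Q_1$ via $\mathbf{S}_1$ and $\tilde{I} \approx Q_2$ via $\mathbf{S}_2$. If $Q_3 = Q_1 \circ Q_2$ via $\mathbf{B}$, then $\tilde{I} \approx Q_3$ via $\mathbf{S}_3$, where $\mathbf{S}_3$ satisfies the matrix equation \[ \mathbf{S}_3 \mathbf{B} = \mathbf{B}_0 ( \mathbf{S}_1 \otimes \mathbf{S}_2 ), \] where \[ \mathbf{B}_0 = \left[ \begin{array}{cccc} 1 & 0 & 0 & D- \lambda^2 \\ 0 & 1 & 1 & 2 \lambda \end{array} \right] \] and $\lambda = [ \sqrt D ]$.
   Context: All forms are properly primitive indefinite integral binary quadratic forms of determinant $D = b^2 - ac > 0$ (not a square), where a form $Q=[a,2b,c]$ is $Q(x_1,x_2) = ax_1^2+2bx_1x_2+cx_2^2 = \mathbf{x}^t \mathbf{Q}\mathbf{x}$ with symmetric matrix $\mathbf{Q} = \left[\begin{array}{cc} a & b\\ b & c\end{array}\right]$. Two forms satisfy $Q_1 \approx Q_2$ via an integer $2\times 2$ matrix $\mathbf{S}$ with $\det \mathbf{S}=1$ if $\mathbf{S}^t \mathbf{Q}_1 \mathbf{S} = \mathbf{Q}_2$. The identity form is $I=[1,0,-D]$, and the reduced identity form $\tilde{I} = [1, 2\lambda, \mu]$ is defined by $I \approx \tilde{I}$ via $\left[\begin{array}{cc} 1 & \lambda \\ 0 & 1\end{array}\right]$ with $\lambda = [\sqrt D]$. A form $Q_3$ is composed of $Q_1$ and $Q_2$ via a $2\times 4$ bilinear matrix $\mathbf{B}$,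 written $Q_3 = Q_1 \circ Q_2$, if $\mathbf{x}^t \mathbf{Q}_1 \mathbf{x}\, \mathbf{y}^t \mathbf{Q}_2 \mathbf{y} = \mathbf{z}^t \mathbf{B}^t \mathbf{Q}_3 \mathbf{B} \mathbf{z}$ identically, where $\mathbf{x}^t=[x_1,x_2]$, $\mathbf{y}^t=[y_1,y_2]$, $\mathbf{z}^t = [x_1y_1, x_1y_2, x_2y_1, x_2y_2]$, and $\mathbf{B}=[b_{ij}]$ is unimodular (its six $2\times 2$ minors $\Delta_{ij}$ formed from columns $i<j$ have gcd 1) and oriented ($a_1\Delta_{12}>0$, $a_2\Delta_{13}>0$ where $a_1,a_2$ are the first coefficients of $Q_1,Q_2$). $\mathbf{S}_1 \otimes \mathbf{S}_2$ denotes the Kronecker product. *)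

theory Defs
  imports Complex_Main "Jordan_Normal_Form.Determinant"
begin

text \<open>A binary quadratic form Q = [a,2b,c] is represented by its symmetric
  integer matrix [[a,b],[b,c]]; its determinant (in the paper's sense) is
  D = b^2 - ac = - det of the matrix.\<close>

definition form_mat :: "int \<Rightarrow> int \<Rightarrow> int \<Rightarrow> int mat" where
  "form_mat a b c = mat_of_rows_list 2 [[a, b], [b, c]]"

definition form_det :: "int mat \<Rightarrow> int" where
  "form_det Q = (Q $$ (0,1))^2 - Q $$ (0,0) * Q $$ (1,1)"

definition is_pp_form :: "int \<Rightarrow> int mat \<Rightarrow> bool" where
  "is_pp_form D Q \<longleftrightarrow> (\<exists>a b c. Q = form_mat a b c \<and> gcd a (gcd b c) = 1) \<and> form_det Q = D"

definition equiv_via :: "int mat \<Rightarrow> int mat \<Rightarrow> int mat \<Rightarrow> bool" where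
  "equiv_via Q1 Q2 S \<longleftrightarrow> S \<in> carrier_mat 2 2 \<and> det S = 1 \<and> transpose_mat S * Q1 * S = Q2"

definition qf :: "int mat \<Rightarrow> int vec \<Rightarrow> int" where
  "qf Q v = v \<bullet> (Q *\<^sub>v v)"

definition minor2 :: "int mat \<Rightarrow> nat \<Rightarrow> nat \<Rightarrow> int" where
  "minor2 B i j = B $$ (0,i) * B $$ (1,j) - B $$ (0,j) * B $$ (1,i)"

definition compose_via :: "int mat \<Rightarrow> int mat \<Rightarrow> int mat \<Rightarrow> int mat \<Rightarrow> bool" where
  "compose_via Q1 Q2 Q3 B \<longleftrightarrow>
     B \<in> carrier_mat 2 4 \<and>
     (\<forall>x1 x2 y1 y2 :: int.
        qf Q1 (vec_of_list [x1, x2]) * qf Q2 (vec_of_list [y1, y2]) =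
        qf (transpose_mat B * Q3 * B) (vec_of_list [x1*y1, x1*y2, x2*y1, x2*y2])) \<and>
     Gcd {minor2 B i j | i j. i < j \<and> j < 4} = 1 \<and>
     Q1 $$ (0,0) * minor2 B 0 1 > 0 \<and> Q2 $$ (0,0) * minor2 B 0 2 > 0"

definition kron :: "int mat \<Rightarrow> int mat \<Rightarrow> int mat" where
  "kron A C = mat (dim_row A * dim_row C) (dim_col A * dim_col C)
     (\<lambda>(i,j). A $$ (i div dim_row C, j div dim_col C) * C $$ (i mod dim_row C, j mod dim_col C))"

definition lam :: "int \<Rightarrow> int" where
  "lam D = \<lfloor>sqrt (real_of_int D)\<rfloor>"

definition id_form :: "int \<Rightarrow> int mat" where
  "id_form D = form_mat 1 0 (- D)"

definition red_shift :: "int \<Rightarrow> int mat" where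
  "red_shift D = mat_of_rows_list 2 [[1, lam D], [0, 1]]"

definition red_id :: "int \<Rightarrow> int mat" where
  "red_id D = transpose_mat (red_shift D) * id_form D * red_shift D"

definition B0 :: "int \<Rightarrow> int mat" where
  "B0 D = mat_of_rows_list 4 [[1, 0, 0, D - (lam D)^2], [0, 1, 1, 2 * lam D]]"

end

theory Submission
  imports Defs
begin

text \<open>
  The bilinear matrix of a composition is determined by the two factors up to left
  multiplication by SL_2(Z). Its six minors are forced: for fixed y the substitution
  x \<mapsto> B (x \<otimes> y) transforms Q3 into Q2(y) Q1, so comparing discriminants gives
  det^2 = Q2(y)^2, the orientation fixes the sign, and the coefficients of the two resulting
  identities of forms give (a1, a2, b1 + b2, b2 - b1, c2, c1) for the minors 12, 13, 14, 23, 24, 34.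
  Two 2 x 4 integer matrices with the same minors, a nonzero first minor and coprime minors
  differ by a unimodular left factor (Cramer's rule on the first two columns; coprimality
  makes it integral). Since B0 composes the reduced identity form with itself, B0 (S1 \<otimes> S2)
  composes Q1 and Q2 into it (oriented, because a1, a2 \<noteq> 0 for non-square D), hence equals
  S3 B; and Q3 = S3^t (red_id D) S3 because both forms agree on the image of B.
\<close>

abbreviation mat22 :: "int \<Rightarrow> int \<Rightarrow> int \<Rightarrow> int \<Rightarrow> int mat" where
  "mat22 a b c d \<equiv> mat_of_rows_list 2 [[a, b], [c, d]]"

abbreviation mat24 :: "int \<Rightarrow> int \<Rightarrow> int \<Rightarrow> int \<Rightarrow> int \<Rightarrow> int \<Rightarrow> int \<Rightarrow> int \<Rightarrow> int mat" where
  "mat24 a b c d e f g h \<equiv> mat_of_rows_list 4 [[a, b, c, d], [e, f, g, h]]"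

lemma less_2_iff: "(i::nat) < 2 \<longleftrightarrow> i = 0 \<or> i = 1"
  by auto

lemma less_4_iff: "(i::nat) < 4 \<longleftrightarrow> i = 0 \<or> i = 1 \<or> i = 2 \<or> i = 3"
  by auto

lemma sum_lessThan_4: "(\<Sum>i<4::nat. f i) = f 0 + f 1 + f 2 + (f 3 :: 'a::comm_monoid_add)"
  by (simp add: eval_nat_numeral)

lemma mat22_carrier [simp]: "mat22 a b c d \<in> carrier_mat 2 2"
proof -
  have "length [[a, b], [c, d]] = 2" by simp
  then show ?thesis by (simp only: mat_of_rows_list_def mat_carrier)
qed

lemma mat24_carrier [simp]: "mat24 a b c d e f g h \<in> carrier_mat 2 4"
proof -
  have "length [[a, b, c, d], [e, f, g, h]] = 2" by simp
  then show ?thesis by (simp only: mat_of_rows_list_def mat_carrier)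
qed

lemma mat22_index [simp]:
  "mat22 a b c d $$ (0, 0) = a" "mat22 a b c d $$ (0, 1) = b"
  "mat22 a b c d $$ (1, 0) = c" "mat22 a b c d $$ (1, 1) = d"
  "mat22 a b c d $$ (0, Suc 0) = b" "mat22 a b c d $$ (Suc 0, 0) = c"
  "mat22 a b c d $$ (Suc 0, Suc 0) = d"
  by (simp_all add: mat_of_rows_list_def)

lemma mat24_index [simp]:
  "mat24 a b c d e f g h $$ (0, 0) = a" "mat24 a b c d e f g h $$ (0, 1) = b"
  "mat24 a b c d e f g h $$ (0, 2) = c" "mat24 a b c d e f g h $$ (0, 3) = d"
  "mat24 a b c d e f g h $$ (1, 0) = e" "mat24 a b c d e f g h $$ (1, 1) = f"
  "mat24 a b c d e f g h $$ (1, 2) = g" "mat24 a b c d e f g h $$ (1, 3) = h"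
  "mat24 a b c d e f g h $$ (0, Suc 0) = b" "mat24 a b c d e f g h $$ (Suc 0, 0) = e"
  "mat24 a b c d e f g h $$ (Suc 0, Suc 0) = f" "mat24 a b c d e f g h $$ (Suc 0, 2) = g"
  "mat24 a b c d e f g h $$ (Suc 0, 3) = h"
  by (simp_all add: mat_of_rows_list_def)

lemma dim_mat22 [simp]: "dim_row (mat22 a b c d) = 2" "dim_col (mat22 a b c d) = 2"
  using mat22_carrier[of a b c d] by (simp_all only: carrier_mat_def mem_Collect_eq)

lemma mat22_eta:
  assumes "A \<in> carrier_mat 2 2"
  shows "A = mat22 (A $$ (0, 0)) (A $$ (0, 1)) (A $$ (1, 0)) (A $$ (1, 1))"
  by (rule eq_matI) (use assms in \<open>auto simp: mat_of_rows_list_def numeral_2_eq_2 less_Suc_eq\<close>)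

lemma mat22_eq_iff: "mat22 a b c d = mat22 a' b' c' d' \<longleftrightarrow> a = a' \<and> b = b' \<and> c = c' \<and> d = d'"
  by (metis mat22_index(1-4))

lemma mat22_mult: "mat22 a b c d * mat22 e f g h = mat22 (a*e + b*g) (a*f + b*h) (c*e + d*g) (c*f + d*h)"
  by (rule eq_matI)
    (auto simp: mat_of_rows_list_def scalar_prod_def row_def col_def numeral_2_eq_2 less_Suc_eq)

lemma mat22_transpose: "transpose_mat (mat22 a b c d) = mat22 a c b d"
  by (rule eq_matI) (auto simp: mat_of_rows_list_def numeral_2_eq_2 less_Suc_eq)

lemma det_2x2:
  assumes "A \<in> carrier_mat 2 2"
  shows "det A = A $$ (0, 0) * A $$ (1, 1) - A $$ (0, 1) * A $$ (1, 0)"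
proof -
  have "det A = (\<Sum>i<2. A $$ (i, 0) * cofactor A i 0)"
    by (rule laplace_expansion_column[OF assms]) auto
  also have "\<dots> = A $$ (0, 0) * A $$ (1, 1) - A $$ (0, 1) * A $$ (1, 0)"
    using assms by (simp add: numeral_2_eq_2 cofactor_def lessThan_Suc det_single mat_delete_def)
  finally show ?thesis .
qed

lemma det_mat22: "det (mat22 a b c d) = a*d - b*c"
  by (simp add: det_2x2)

lemma index_mult_mat_inner_2:
  assumes "A \<in> carrier_mat n 2" "B \<in> carrier_mat 2 m" "i < n" "j < m"
  shows "(A * B) $$ (i, j) = A $$ (i, 0) * B $$ (0, j) + A $$ (i, 1) * B $$ (1, j)"
  using assms by (simp add: scalar_prod_def numeral_2_eq_2)

lemma index_mult_mat_inner_4: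
  assumes "A \<in> carrier_mat n 4" "B \<in> carrier_mat 4 m" "i < n" "j < m"
  shows "(A * B) $$ (i, j) =
    A $$ (i, 0) * B $$ (0, j) + A $$ (i, 1) * B $$ (1, j) + A $$ (i, 2) * B $$ (2, j) + A $$ (i, 3) * B $$ (3, j)"
  using assms by (simp add: scalar_prod_def atLeast0LessThan sum_lessThan_4)

lemma qf_congruence:
  assumes "S \<in> carrier_mat n m" "Q \<in> carrier_mat n n" "v \<in> carrier_vec m"
  shows "qf (transpose_mat S * Q * S) v = qf Q (S *\<^sub>v v)"
proof -
  have "(transpose_mat S * Q * S) *\<^sub>v v = (transpose_mat S * Q) *\<^sub>v (S *\<^sub>v v)"
    by (rule assoc_mult_mat_vec) (use assms in auto)
  also have "\<dots> = transpose_mat S *\<^sub>v (Q *\<^sub>v (S *\<^sub>v v))"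
    by (rule assoc_mult_mat_vec) (use assms in auto)
  finally have "(transpose_mat S * Q * S) *\<^sub>v v = transpose_mat S *\<^sub>v (Q *\<^sub>v (S *\<^sub>v v))" .
  then have "qf (transpose_mat S * Q * S) v = (transpose_mat S *\<^sub>v (Q *\<^sub>v (S *\<^sub>v v))) \<bullet> v"
    using assms unfolding qf_def by (simp add: comm_scalar_prod[of v m])
  also have "\<dots> = qf Q (S *\<^sub>v v)"
    using assms unfolding qf_def
    by (simp add: transpose_vec_mult_scalar comm_scalar_prod[of "S *\<^sub>v v" n])
  finally show ?thesis .
qed

definition bqf :: "int \<Rightarrow> int \<Rightarrow> int \<Rightarrow> int \<Rightarrow> int \<Rightarrow> int" where
  "bqf a b c x y = a*x^2 + 2*b*x*y + c*y^2"

definition bqf_polar :: "int \<Rightarrow> int \<Rightarrow> int \<Rightarrow> int \<Rightarrow> int \<Rightarrow> int \<Rightarrow> int \<Rightarrow> int" where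
  "bqf_polar a b c u1 u2 w1 w2 = a*u1*w1 + b*(u1*w2 + u2*w1) + c*u2*w2"

lemma bqf_add:
  "bqf a b c (u1 + w1) (u2 + w2) = bqf a b c u1 u2 + 2 * bqf_polar a b c u1 u2 w1 w2 + bqf a b c w1 w2"
  by (simp add: bqf_def bqf_polar_def power2_eq_square algebra_simps)

lemma bqf_diff: "bqf a b c x y - bqf a' b' c' x y = bqf (a - a') (b - b') (c - c') x y"
  by (simp add: bqf_def algebra_simps)

lemma bqf_linear_substitution:
  "bqf a b c (u1*x + w1*y) (u2*x + w2*y) =
    bqf (bqf a b c u1 u2) (bqf_polar a b c u1 u2 w1 w2) (bqf a b c w1 w2) x y"
  by (simp add: bqf_def bqf_polar_def power2_eq_square algebra_simps)

lemma bqf_mult_minus_polar_square: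
  "bqf a b c u1 u2 * bqf a b c w1 w2 - (bqf_polar a b c u1 u2 w1 w2)^2 = (a*c - b^2) * (u1*w2 - w1*u2)^2"
  by (simp add: bqf_def bqf_polar_def power2_eq_square algebra_simps)

lemma bqf_substitution_discriminant:
  assumes subst: "\<And>x y. bqf a b c (u1*x + w1*y) (u2*x + w2*y) = G * bqf a' b' c' x y"
  shows "(u1*w2 - w1*u2)^2 * (b^2 - a*c) = G^2 * (b'^2 - a'*c')"
proof -
  have u: "bqf a b c u1 u2 = G * a'" and w: "bqf a b c w1 w2 = G * c'"
    using subst[of 1 0] subst[of 0 1] by (simp_all add: bqf_def)
  have "bqf a b c (u1 + w1) (u2 + w2) = G * (a' + 2*b' + c')"
    using subst[of 1 1] by (simp add: bqf_def)
  then have polar: "bqf_polar a b c u1 u2 w1 w2 = G * b'"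
    unfolding bqf_add u w by (simp add: algebra_simps)
  have "G^2 * (b'^2 - a'*c') = - (bqf a b c u1 u2 * bqf a b c w1 w2 - (bqf_polar a b c u1 u2 w1 w2)^2)"
    unfolding u w polar by (simp add: power2_eq_square algebra_simps)
  also have "\<dots> = (u1*w2 - w1*u2)^2 * (b^2 - a*c)"
    unfolding bqf_mult_minus_polar_square by (simp add: algebra_simps)
  finally show ?thesis ..
qed

lemma bqf_coeffs_eq:
  assumes u: "bqf a b c u1 u2 = bqf a' b' c' u1 u2" and w: "bqf a b c w1 w2 = bqf a' b' c' w1 w2"
    and uw: "bqf a b c (u1 + w1) (u2 + w2) = bqf a' b' c' (u1 + w1) (u2 + w2)"
    and indep: "u1*w2 - w1*u2 \<noteq> 0"
  shows "a = a' \<and> b = b' \<and> c = c'"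
proof -
  define g1 g2 g3 where "g1 = a - a'" and "g2 = b - b'" and "g3 = c - c'"
  have g: "bqf g1 g2 g3 x y = bqf a b c x y - bqf a' b' c' x y" for x y
    unfolding g1_def g2_def g3_def bqf_diff ..
  have "bqf g1 g2 g3 u1 u2 = 0" "bqf g1 g2 g3 w1 w2 = 0" "bqf_polar g1 g2 g3 u1 u2 w1 w2 = 0"
    using u w uw bqf_add[of g1 g2 g3 u1 w1 u2 w2] unfolding g by simp_all
  then have vanish: "bqf g1 g2 g3 (u1*x + w1*y) (u2*x + w2*y) = 0" for x y
    unfolding bqf_linear_substitution by (simp add: bqf_def)
  define d where "d = u1*w2 - w1*u2"
  \<comment> \<open>evaluate at the columns of the adjugate of the substitution matrix\<close>
  have "g1 * d^2 = 0" using vanish[of w2 "-u2"] by (simp add: bqf_def d_def power2_eq_square algebra_simps)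
  moreover have "g3 * d^2 = 0" using vanish[of "-w1" u1] by (simp add: bqf_def d_def power2_eq_square algebra_simps)
  moreover have "(g1 + 2*g2 + g3) * d^2 = 0"
    using vanish[of "w2 - w1" "u1 - u2"] by (simp add: bqf_def d_def power2_eq_square algebra_simps)
  ultimately show ?thesis
    using indep unfolding d_def g1_def g2_def g3_def by simp
qed

lemma quadratic_form_eq_if_squares_eq:
  fixes A E C a e c :: int
  assumes sq: "\<And>x y. (A*x^2 + E*x*y + C*y^2)^2 = (a*x^2 + e*x*y + c*y^2)^2"
    and pos: "A*a > 0"
  shows "A = a \<and> E = e \<and> C = c"
proof -
  have "A = a \<or> A = - a"
    using sq[of 1 0] by (simp add: power2_eq_iff)
  with pos have Aa: "A = a"
    by (auto simp: mult_less_0_iff)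
  define k1 where "k1 = 2*a*(E - e)"
  define k2 where "k2 = E^2 + 2*a*C - e^2 - 2*a*c"
  define k3 where "k3 = 2*(E*C - e*c)"
  have k4: "C^2 - c^2 = 0"
    using sq[of 0 1] by simp
  have t: "k1*t + k2*t^2 + k3*t^3 = 0" for t
  proof -
    have "(A + E*t + C*t^2)^2 - (a + e*t + c*t^2)^2 = k1*t + k2*t^2 + k3*t^3 + (C^2 - c^2)*t^4"
      unfolding Aa k1_def k2_def k3_def by (simp add: power2_eq_square power3_eq_cube power4_eq_xxxx algebra_simps)
    then show ?thesis
      using sq[of 1 t] k4 by simp
  qed
  have "k1 + k2 + k3 = 0" "- k1 + k2 - k3 = 0" "2*k1 + 4*k2 + 8*k3 = 0"
    using t[of 1] t[of "-1"] t[of 2] by simp_all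
  then have "k1 = 0" "k2 = 0"
    by linarith+
  have a0: "a \<noteq> 0"
    using pos by auto
  with \<open>k1 = 0\<close> have Ee: "E = e"
    unfolding k1_def by simp
  with \<open>k2 = 0\<close> have "2*a*(C - c) = 0"
    unfolding k2_def by (simp add: algebra_simps)
  with a0 have "C = c"
    by simp
  with Aa Ee show ?thesis
    by simp
qed

section \<open>Minors of a composition matrix\<close>

definition bilin :: "int mat \<Rightarrow> nat \<Rightarrow> int \<Rightarrow> int \<Rightarrow> int \<Rightarrow> int \<Rightarrow> int" where
  "bilin B i x1 x2 y1 y2 = B $$ (i, 0)*x1*y1 + B $$ (i, 1)*x1*y2 + B $$ (i, 2)*x2*y1 + B $$ (i, 3)*x2*y2"

lemma composition_minors_right:
  assumes comp: "\<And>x1 x2 y1 y2. bqf a1 b1 c1 x1 x2 * bqf a2 b2 c2 y1 y2 =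
      bqf a b c (bilin B 0 x1 x2 y1 y2) (bilin B 1 x1 x2 y1 y2)"
    and disc: "b1^2 - a1*c1 = b^2 - a*c" "b^2 - a*c \<noteq> 0"
    and orient: "a2 * minor2 B 0 2 > 0"
  shows "minor2 B 0 2 = a2 \<and> minor2 B 0 3 + minor2 B 1 2 = 2*b2 \<and> minor2 B 1 3 = c2"
proof (rule quadratic_form_eq_if_squares_eq)
  fix y1 y2
  \<comment> \<open>for fixed y, the substitution x \<mapsto> B (x \<otimes> y) turns Q3 into Q2(y) Q1; compare discriminants\<close>
  define u1 u2 w1 w2 where "u1 = B $$ (0, 0)*y1 + B $$ (0, 1)*y2" and "u2 = B $$ (1, 0)*y1 + B $$ (1, 1)*y2"
    and "w1 = B $$ (0, 2)*y1 + B $$ (0, 3)*y2" and "w2 = B $$ (1, 2)*y1 + B $$ (1, 3)*y2"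
  have "bqf a b c (u1*x1 + w1*x2) (u2*x1 + w2*x2) = bqf a2 b2 c2 y1 y2 * bqf a1 b1 c1 x1 x2" for x1 x2
    using comp[of x1 x2 y1 y2] unfolding bilin_def u1_def u2_def w1_def w2_def
    by (simp add: algebra_simps)
  from bqf_substitution_discriminant[OF this] have "(u1*w2 - w1*u2)^2 = (bqf a2 b2 c2 y1 y2)^2"
    using disc by simp
  moreover have "u1*w2 - w1*u2 =
      minor2 B 0 2 * y1^2 + (minor2 B 0 3 + minor2 B 1 2)*y1*y2 + minor2 B 1 3 * y2^2"
    unfolding u1_def u2_def w1_def w2_def minor2_def by (simp add: power2_eq_square algebra_simps)
  ultimately show "(minor2 B 0 2 * y1^2 + (minor2 B 0 3 + minor2 B 1 2)*y1*y2 + minor2 B 1 3 * y2^2)^2 =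
      (a2*y1^2 + (2*b2)*y1*y2 + c2*y2^2)^2"
    by (simp add: bqf_def)
qed (use orient in \<open>simp add: mult.commute\<close>)

lemma composition_minors_left:
  assumes comp: "\<And>x1 x2 y1 y2. bqf a1 b1 c1 x1 x2 * bqf a2 b2 c2 y1 y2 =
      bqf a b c (bilin B 0 x1 x2 y1 y2) (bilin B 1 x1 x2 y1 y2)"
    and disc: "b2^2 - a2*c2 = b^2 - a*c" "b^2 - a*c \<noteq> 0"
    and orient: "a1 * minor2 B 0 1 > 0"
  shows "minor2 B 0 1 = a1 \<and> minor2 B 0 3 - minor2 B 1 2 = 2*b1 \<and> minor2 B 2 3 = c1"
proof (rule quadratic_form_eq_if_squares_eq)
  fix x1 x2
  define u1 u2 w1 w2 where "u1 = B $$ (0, 0)*x1 + B $$ (0, 2)*x2" and "u2 = B $$ (1, 0)*x1 + B $$ (1, 2)*x2"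
    and "w1 = B $$ (0, 1)*x1 + B $$ (0, 3)*x2" and "w2 = B $$ (1, 1)*x1 + B $$ (1, 3)*x2"
  have "bqf a b c (u1*y1 + w1*y2) (u2*y1 + w2*y2) = bqf a1 b1 c1 x1 x2 * bqf a2 b2 c2 y1 y2" for y1 y2
    using comp[of x1 x2 y1 y2] unfolding bilin_def u1_def u2_def w1_def w2_def
    by (simp add: algebra_simps)
  from bqf_substitution_discriminant[OF this] have "(u1*w2 - w1*u2)^2 = (bqf a1 b1 c1 x1 x2)^2"
    using disc by simp
  moreover have "u1*w2 - w1*u2 =
      minor2 B 0 1 * x1^2 + (minor2 B 0 3 - minor2 B 1 2)*x1*x2 + minor2 B 2 3 * x2^2"
    unfolding u1_def u2_def w1_def w2_def minor2_def by (simp add: power2_eq_square algebra_simps)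
  ultimately show "(minor2 B 0 1 * x1^2 + (minor2 B 0 3 - minor2 B 1 2)*x1*x2 + minor2 B 2 3 * x2^2)^2 =
      (a1*x1^2 + (2*b1)*x1*x2 + c1*x2^2)^2"
    by (simp add: bqf_def)
qed (use orient in \<open>simp add: mult.commute\<close>)

lemma composition_minors:
  assumes comp: "\<And>x1 x2 y1 y2. bqf a1 b1 c1 x1 x2 * bqf a2 b2 c2 y1 y2 =
      bqf a b c (bilin B 0 x1 x2 y1 y2) (bilin B 1 x1 x2 y1 y2)"
    and disc: "b1^2 - a1*c1 = D" "b2^2 - a2*c2 = D" "b^2 - a*c = D" and "D \<noteq> 0"
    and orient: "a1 * minor2 B 0 1 > 0" "a2 * minor2 B 0 2 > 0"
  shows "minor2 B 0 1 = a1 \<and> minor2 B 0 2 = a2 \<and> minor2 B 0 3 = b1 + b2 \<and>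
    minor2 B 1 2 = b2 - b1 \<and> minor2 B 1 3 = c2 \<and> minor2 B 2 3 = c1"
  using composition_minors_left[OF comp _ _ orient(1)] composition_minors_right[OF comp _ _ orient(2)]
    disc \<open>D \<noteq> 0\<close> by auto

section \<open>Matrices with equal minors\<close>

lemma minor2_mult:
  assumes "S \<in> carrier_mat 2 2" "B \<in> carrier_mat 2 n" "i < n" "j < n"
  shows "minor2 (S * B) i j = det S * minor2 B i j"
proof -
  have "(S * B) $$ (r, k) = S $$ (r, 0) * B $$ (0, k) + S $$ (r, 1) * B $$ (1, k)" if "r < 2" "k < n" for r k
    using index_mult_mat_inner_2 assms that by blast
  then show ?thesis
    using assms by (simp add: minor2_def det_2x2 algebra_simps del: index_mult_mat)
qed

lemma dvd_if_dvd_mult_Gcd_eq_1: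
  fixes d n :: "'a :: semiring_Gcd"
  assumes "Gcd M = 1" and "\<And>m. m \<in> M \<Longrightarrow> d dvd n * m"
  shows "d dvd n"
proof -
  have "d dvd Gcd ((*) n ` M)"
    using assms(2) by (auto simp: dvd_Gcd_iff)
  then show ?thesis
    using assms(1) by (simp add: Gcd_mult)
qed

text \<open>The first two columns of B' times the adjugate of the first two columns of B.\<close>

definition cramer_mat :: "int mat \<Rightarrow> int mat \<Rightarrow> int mat" where
  "cramer_mat B B' = mat 2 2 (\<lambda>(r, s).
     if s = 0 then B' $$ (r, 0) * B $$ (1, 1) - B' $$ (r, 1) * B $$ (1, 0)
     else B' $$ (r, 1) * B $$ (0, 0) - B' $$ (r, 0) * B $$ (0, 1))"

lemma cramer_mat_mult:
  assumes minors: "\<And>i j. i < 4 \<Longrightarrow> j < 4 \<Longrightarrow> minor2 B' i j = minor2 B i j"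
    and "r < 2" "k < 4"
  shows "minor2 B 0 1 * B' $$ (r, k) =
    cramer_mat B B' $$ (r, 0) * B $$ (0, k) + cramer_mat B B' $$ (r, 1) * B $$ (1, k)"
proof -
  have "cramer_mat B B' $$ (r, 0) * B $$ (0, k) + cramer_mat B B' $$ (r, 1) * B $$ (1, k) =
      B' $$ (r, 0) * minor2 B k 1 + B' $$ (r, 1) * minor2 B 0 k"
    using \<open>r < 2\<close> by (simp add: cramer_mat_def minor2_def algebra_simps)
  also have "\<dots> = B' $$ (r, 0) * minor2 B' k 1 + B' $$ (r, 1) * minor2 B' 0 k"
    using minors \<open>k < 4\<close> by simp
  also have "\<dots> = minor2 B' 0 1 * B' $$ (r, k)"
    using \<open>r < 2\<close> by (auto simp: less_2_iff minor2_def algebra_simps)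
  finally show ?thesis
    using minors[of 0 1] by simp
qed

lemma minor2_dvd_cramer_mat:
  assumes minors: "\<And>i j. i < 4 \<Longrightarrow> j < 4 \<Longrightarrow> minor2 B' i j = minor2 B i j"
    and coprime: "Gcd {minor2 B i j | i j. i < j \<and> j < 4} = 1"
    and "r < 2" "s < 2"
  shows "minor2 B 0 1 dvd cramer_mat B B' $$ (r, s)"
proof (rule dvd_if_dvd_mult_Gcd_eq_1[OF coprime])
  fix m
  assume "m \<in> {minor2 B i j | i j. i < j \<and> j < 4}"
  then obtain i j where m: "m = minor2 B i j" and "i < 4" "j < 4"
    by auto
  let ?d = "minor2 B 0 1" and ?N = "cramer_mat B B'"
  let ?col = "\<lambda>k. ?N $$ (r, 0) * B $$ (0, k) + ?N $$ (r, 1) * B $$ (1, k)"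
  have ci: "?col i = ?d * B' $$ (r, i)" and cj: "?col j = ?d * B' $$ (r, j)"
    using cramer_mat_mult[OF minors \<open>r < 2\<close>] \<open>i < 4\<close> \<open>j < 4\<close> by simp_all
  have "?N $$ (r, 0) * m = B $$ (1, j) * (?d * B' $$ (r, i)) - B $$ (1, i) * (?d * B' $$ (r, j))"
    and "?N $$ (r, 1) * m = B $$ (0, i) * (?d * B' $$ (r, j)) - B $$ (0, j) * (?d * B' $$ (r, i))"
    by (simp_all only: ci[symmetric] cj[symmetric]) (simp_all add: m minor2_def algebra_simps)
  then have "?d dvd ?N $$ (r, 0) * m" "?d dvd ?N $$ (r, 1) * m"
    by (simp_all add: right_diff_distrib[symmetric] mult.left_commute[of _ ?d])
  then show "?d dvd ?N $$ (r, s) * m"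
    using \<open>s < 2\<close> by (auto simp: less_2_iff)
qed

lemma left_SL2_factor_if_minors_eq:
  fixes B B' :: "int mat"
  assumes B: "B \<in> carrier_mat 2 4" and B': "B' \<in> carrier_mat 2 4"
    and minors: "\<And>i j. i < j \<Longrightarrow> j < 4 \<Longrightarrow> minor2 B' i j = minor2 B i j"
    and nz: "minor2 B 0 1 \<noteq> 0"
    and coprime: "Gcd {minor2 B i j | i j. i < j \<and> j < 4} = 1"
  shows "\<exists>S \<in> carrier_mat 2 2. det S = 1 \<and> B' = S * B"
proof -
  let ?d = "minor2 B 0 1" and ?N = "cramer_mat B B'"
  have minors_all: "minor2 B' i j = minor2 B i j" if "i < 4" "j < 4" for i j
    using minors[of i j] minors[of j i] that
    by (cases i j rule: linorder_cases) (auto simp: minor2_def algebra_simps)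
  define S where "S = mat 2 2 (\<lambda>(r, s). ?N $$ (r, s) div ?d)"
  have S: "S \<in> carrier_mat 2 2"
    by (simp add: S_def)
  have N_eq: "?N $$ (r, s) = ?d * S $$ (r, s)" if "r < 2" "s < 2" for r s
    using minor2_dvd_cramer_mat[OF minors_all coprime that] that by (simp add: S_def)
  have B'_eq: "B' = S * B"
  proof (rule eq_matI)
    fix r k
    assume "r < dim_row (S * B)" "k < dim_col (S * B)"
    then have rk: "r < 2" "k < 4"
      using S B by simp_all
    have "?d * B' $$ (r, k) = ?d * (S * B) $$ (r, k)"
      using cramer_mat_mult[OF minors_all rk] N_eq[of r 0] N_eq[of r 1] index_mult_mat_inner_2[OF S B rk] rk
      by (simp add: algebra_simps del: index_mult_mat)
    then show "B' $$ (r, k) = (S * B) $$ (r, k)"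
      using nz by simp
  qed (use S B B' in simp_all)
  have "det S * ?d = ?d"
    using minor2_mult[OF S B, of 0 1] minors[of 0 1] unfolding B'_eq by simp
  then have "det S = 1"
    using nz by simp
  with S B'_eq show ?thesis
    by blast
qed

section \<open>Uniqueness of composition\<close>

definition oriented_composition :: "int mat \<Rightarrow> int mat \<Rightarrow> int mat \<Rightarrow> int mat \<Rightarrow> bool" where
  "oriented_composition Q1 Q2 Q3 B \<longleftrightarrow>
     B \<in> carrier_mat 2 4 \<and>
     (\<forall>x1 x2 y1 y2 :: int.
        qf Q1 (vec_of_list [x1, x2]) * qf Q2 (vec_of_list [y1, y2]) =
        qf (transpose_mat B * Q3 * B) (vec_of_list [x1*y1, x1*y2, x2*y1, x2*y2])) \<and>
     Q1 $$ (0, 0) * minor2 B 0 1 > 0 \<and> Q2 $$ (0, 0) * minor2 B 0 2 > 0"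

lemma compose_via_iff:
  "compose_via Q1 Q2 Q3 B \<longleftrightarrow>
    oriented_composition Q1 Q2 Q3 B \<and> Gcd {minor2 B i j | i j. i < j \<and> j < 4} = 1"
  unfolding compose_via_def oriented_composition_def by blast

lemma form_mat_index [simp]: "form_mat a b c $$ (0, 0) = a"
  by (simp add: form_mat_def mat_of_rows_list_def)

lemma qf_form_mat: "qf (form_mat a b c) (vec_of_list [x, y]) = bqf a b c x y"
  by (simp add: qf_def form_mat_def bqf_def scalar_prod_def mat_of_rows_list_def numeral_2_eq_2
      row_def mult_mat_vec_def power2_eq_square algebra_simps)

lemma mult_mat_vec_tensor:
  assumes "B \<in> carrier_mat 2 4"
  shows "B *\<^sub>v vec_of_list [x1*y1, x1*y2, x2*y1, x2*y2] =
    vec_of_list [bilin B 0 x1 x2 y1 y2, bilin B 1 x1 x2 y1 y2]"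
proof (rule eq_vecI)
  fix i
  assume "i < dim_vec (vec_of_list [bilin B 0 x1 x2 y1 y2, bilin B 1 x1 x2 y1 y2])"
  then have "i = 0 \<or> i = 1"
    by (simp add: less_Suc_eq)
  then show "(B *\<^sub>v vec_of_list [x1*y1, x1*y2, x2*y1, x2*y2]) $ i =
    vec_of_list [bilin B 0 x1 x2 y1 y2, bilin B 1 x1 x2 y1 y2] $ i"
    using assms by (auto simp: scalar_prod_def sum_lessThan_4 atLeast0LessThan bilin_def eval_nat_numeral algebra_simps)
qed (use assms in simp)

lemma oriented_composition_form_mat:
  "oriented_composition (form_mat a1 b1 c1) (form_mat a2 b2 c2) (form_mat a b c) B \<longleftrightarrow>
     B \<in> carrier_mat 2 4 \<and>
     (\<forall>x1 x2 y1 y2. bqf a1 b1 c1 x1 x2 * bqf a2 b2 c2 y1 y2 =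
        bqf a b c (bilin B 0 x1 x2 y1 y2) (bilin B 1 x1 x2 y1 y2)) \<and>
     a1 * minor2 B 0 1 > 0 \<and> a2 * minor2 B 0 2 > 0"
proof -
  have "qf (transpose_mat B * form_mat a b c * B) (vec_of_list [x1*y1, x1*y2, x2*y1, x2*y2]) =
      bqf a b c (bilin B 0 x1 x2 y1 y2) (bilin B 1 x1 x2 y1 y2)"
    if B: "B \<in> carrier_mat 2 4" for x1 x2 y1 y2
  proof -
    have "vec_of_list [x1*y1, x1*y2, x2*y1, x2*y2] \<in> carrier_vec 4"
      by (rule carrier_vecI) simp
    moreover have "form_mat a b c \<in> carrier_mat 2 2"
      by (simp add: form_mat_def)
    ultimately show ?thesis
      by (simp only: qf_congruence[OF B] mult_mat_vec_tensor[OF B] qf_form_mat)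
  qed
  then show ?thesis
    unfolding oriented_composition_def qf_form_mat by auto
qed

definition is_form :: "int \<Rightarrow> int mat \<Rightarrow> bool" where
  "is_form D Q \<longleftrightarrow> (\<exists>a b c. Q = form_mat a b c) \<and> form_det Q = D"

lemma form_det_form_mat: "form_det (form_mat a b c) = b^2 - a*c"
  by (simp add: form_det_def form_mat_def mat_of_rows_list_def)

lemma is_formE:
  assumes "is_form D Q"
  obtains a b c where "Q = form_mat a b c" "b^2 - a*c = D"
  using assms unfolding is_form_def by (auto simp: form_det_form_mat)

lemma is_form_if_is_pp_form: "is_pp_form D Q \<Longrightarrow> is_form D Q"
  unfolding is_pp_form_def is_form_def by blast

lemma red_id_eq_form_mat: "red_id D = form_mat 1 (lam D) ((lam D)^2 - D)"
  by (simp add: red_id_def red_shift_def id_form_def form_mat_def mat22_transpose mat22_mult power2_eq_square)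

lemma is_form_red_id: "is_form D (red_id D)"
  unfolding is_form_def red_id_eq_form_mat form_det_form_mat by auto

lemma congruence_form_mat:
  "transpose_mat (mat22 r1 r2 r3 r4) * form_mat a b c * mat22 r1 r2 r3 r4 =
    form_mat (bqf a b c r1 r3) (bqf_polar a b c r1 r3 r2 r4) (bqf a b c r2 r4)"
  by (simp add: form_mat_def mat22_transpose mat22_mult mat22_eq_iff bqf_def bqf_polar_def
      power2_eq_square algebra_simps)

lemma bilin_mult:
  assumes "S \<in> carrier_mat 2 2" "B \<in> carrier_mat 2 4" "i < 2"
  shows "bilin (S * B) i x1 x2 y1 y2 = S $$ (i, 0) * bilin B 0 x1 x2 y1 y2 + S $$ (i, 1) * bilin B 1 x1 x2 y1 y2"
  using index_mult_mat_inner_2[OF assms(1,2) assms(3)] unfolding bilin_def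
  by (simp add: algebra_simps del: index_mult_mat)

lemma congruent_if_agree_on_composition_image:
  assumes S: "S \<in> carrier_mat 2 2" and B: "B \<in> carrier_mat 2 4" and nz: "minor2 B 0 1 \<noteq> 0"
    and agree: "\<And>x1 x2 y1 y2. bqf a b c (bilin B 0 x1 x2 y1 y2) (bilin B 1 x1 x2 y1 y2) =
      bqf a' b' c' (bilin (S * B) 0 x1 x2 y1 y2) (bilin (S * B) 1 x1 x2 y1 y2)"
  shows "transpose_mat S * form_mat a' b' c' * S = form_mat a b c"
proof -
  obtain r1 r2 r3 r4 where S_eq: "S = mat22 r1 r2 r3 r4"
    using mat22_eta[OF S] by blast
  define A P C where "A = bqf a' b' c' r1 r3" and "P = bqf_polar a' b' c' r1 r3 r2 r4"
    and "C = bqf a' b' c' r2 r4"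
  have agree': "bqf a b c (bilin B 0 x1 x2 y1 y2) (bilin B 1 x1 x2 y1 y2) =
      bqf A P C (bilin B 0 x1 x2 y1 y2) (bilin B 1 x1 x2 y1 y2)" for x1 x2 y1 y2
  proof -
    have "bqf a b c (bilin B 0 x1 x2 y1 y2) (bilin B 1 x1 x2 y1 y2) =
        bqf a' b' c' (r1 * bilin B 0 x1 x2 y1 y2 + r2 * bilin B 1 x1 x2 y1 y2)
          (r3 * bilin B 0 x1 x2 y1 y2 + r4 * bilin B 1 x1 x2 y1 y2)"
      using agree bilin_mult[OF S B] unfolding S_eq by simp
    also have "\<dots> = bqf A P C (bilin B 0 x1 x2 y1 y2) (bilin B 1 x1 x2 y1 y2)"
      unfolding A_def P_def C_def by (rule bqf_linear_substitution)
    finally show ?thesis .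
  qed
  \<comment> \<open>x = (1, 0) and y = (1, 0), (0, 1), (1, 1) pick out the first two columns of B and their sum\<close>
  have "a = A \<and> b = P \<and> c = C"
    using bqf_coeffs_eq[of a b c "B $$ (0, 0)" "B $$ (1, 0)" A P C "B $$ (0, 1)" "B $$ (1, 1)"]
      agree'[of 1 0 1 0] agree'[of 1 0 0 1] agree'[of 1 0 1 1] nz
    by (simp add: bilin_def minor2_def algebra_simps)
  then show ?thesis
    unfolding S_eq congruence_form_mat A_def P_def C_def by simp
qed

lemma compose_via_unique:
  assumes "compose_via Q1 Q2 Q3 B" "oriented_composition Q1 Q2 Q3' B'"
    and "is_form D Q1" "is_form D Q2" "is_form D Q3" "is_form D Q3'" "D \<noteq> 0"
  shows "\<exists>S. equiv_via Q3' Q3 S \<and> S * B = B'"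
proof -
  obtain a1 b1 c1 a2 b2 c2 a b c a' b' c' where forms:
    "Q1 = form_mat a1 b1 c1" "Q2 = form_mat a2 b2 c2" "Q3 = form_mat a b c" "Q3' = form_mat a' b' c'"
    and disc: "b1^2 - a1*c1 = D" "b2^2 - a2*c2 = D" "b^2 - a*c = D" "b'^2 - a'*c' = D"
    using assms(3-6) by (metis is_formE)
  note comp = assms(1-2)[unfolded compose_via_iff forms oriented_composition_form_mat]
  have nz: "minor2 B 0 1 \<noteq> 0"
    using comp by auto
  have "minor2 B' i j = minor2 B i j" if "i < j" "j < 4" for i j
  proof -
    have "i = 0 \<and> j = 1 \<or> i = 0 \<and> j = 2 \<or> i = 0 \<and> j = 3 \<or> i = 1 \<and> j = 2 \<or> i = 1 \<and> j = 3 \<or> i = 2 \<and> j = 3"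
      using that by arith
    then show ?thesis
      using composition_minors[of a1 b1 c1 a2 b2 c2 a b c B D]
        composition_minors[of a1 b1 c1 a2 b2 c2 a' b' c' B' D] comp disc \<open>D \<noteq> 0\<close>
      by auto
  qed
  then obtain S where S: "S \<in> carrier_mat 2 2" "det S = 1" and B': "B' = S * B"
    using left_SL2_factor_if_minors_eq[of B B'] comp nz by auto
  have "transpose_mat S * Q3' * S = Q3"
    unfolding forms using S(1) comp nz by (intro congruent_if_agree_on_composition_image) (auto simp: B')
  with S B' show ?thesis
    unfolding equiv_via_def by blast
qed

section \<open>Composition with the reduced identity form\<close>

lemma carrier_kron: "kron A C \<in> carrier_mat (dim_row A * dim_row C) (dim_col A * dim_col C)"
  by (simp add: kron_def)

lemma index_kron:
  assumes "i < dim_row A * dim_row C" "j < dim_col A * dim_col C"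
  shows "kron A C $$ (i, j) =
    A $$ (i div dim_row C, j div dim_col C) * C $$ (i mod dim_row C, j mod dim_col C)"
  using assms by (simp add: kron_def)

lemma B0_mult_kron:
  "B0 D * kron (mat22 s1 s2 s3 s4) (mat22 t1 t2 t3 t4) =
    mat24 (s1*t1 + (D - (lam D)^2)*s3*t3) (s1*t2 + (D - (lam D)^2)*s3*t4)
      (s2*t1 + (D - (lam D)^2)*s4*t3) (s2*t2 + (D - (lam D)^2)*s4*t4)
      (s1*t3 + s3*t1 + 2*lam D*s3*t3) (s1*t4 + s3*t2 + 2*lam D*s3*t4)
      (s2*t3 + s4*t1 + 2*lam D*s4*t3) (s2*t4 + s4*t2 + 2*lam D*s4*t4)"
  (is "?L = ?R")
proof (rule eq_matI)
  have B0: "B0 D \<in> carrier_mat 2 4"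
    by (simp add: B0_def)
  have K: "kron (mat22 s1 s2 s3 s4) (mat22 t1 t2 t3 t4) \<in> carrier_mat 4 4"
    using carrier_kron[of "mat22 s1 s2 s3 s4" "mat22 t1 t2 t3 t4"] by simp
  fix i j
  assume "i < dim_row ?R" "j < dim_col ?R"
  then have ij: "i < 2" "j < 4"
    by (simp_all add: mat_of_rows_list_def)
  show "?L $$ (i, j) = ?R $$ (i, j)"
    unfolding index_mult_mat_inner_4[OF B0 K ij] using ij unfolding less_2_iff less_4_iff
    by (elim disjE) (simp_all add: index_kron B0_def algebra_simps)
qed (simp_all add: B0_def kron_def mat_of_rows_list_def)

text \<open>The rows of B0 are multiplication in Z[\<alpha>], \<alpha> = l + sqrt D, where
  \<alpha>^2 = 2 l \<alpha> + (D - l^2); the form bqf 1 l (l^2 - D) is the norm of u1 + u2 \<alpha>.\<close>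

lemma bqf_red_id_mult:
  "bqf 1 l (l^2 - D) u1 u2 * bqf 1 l (l^2 - D) w1 w2 =
    bqf 1 l (l^2 - D) (u1*w1 + (D - l^2)*u2*w2) (u1*w2 + u2*w1 + 2*l*u2*w2)"
  by (simp add: bqf_def power2_eq_square algebra_simps)

lemma first_coeff_nonzero:
  assumes "is_form D Q" "\<not> (\<exists>k. D = k^2)"
  shows "Q $$ (0, 0) \<noteq> 0"
proof -
  obtain a b c where "Q = form_mat a b c" "b^2 - a*c = D"
    using assms(1) by (rule is_formE)
  then show ?thesis
    using assms(2) by auto
qed

lemma oriented_composition_B0_kron:
  assumes "equiv_via (red_id D) Q1 S1" "equiv_via (red_id D) Q2 S2"
    and "Q1 $$ (0, 0) \<noteq> 0" "Q2 $$ (0, 0) \<noteq> 0"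
  shows "oriented_composition Q1 Q2 (red_id D) (B0 D * kron S1 S2)"
proof -
  define l where "l = lam D"
  obtain s1 s2 s3 s4 where S1: "S1 = mat22 s1 s2 s3 s4"
    using assms(1) mat22_eta unfolding equiv_via_def by blast
  obtain t1 t2 t3 t4 where S2: "S2 = mat22 t1 t2 t3 t4"
    using assms(2) mat22_eta unfolding equiv_via_def by blast
  let ?I = "bqf 1 l (l^2 - D)"
  have Q1: "Q1 = form_mat (?I s1 s3) (bqf_polar 1 l (l^2 - D) s1 s3 s2 s4) (?I s2 s4)"
    and Q2: "Q2 = form_mat (?I t1 t3) (bqf_polar 1 l (l^2 - D) t1 t3 t2 t4) (?I t2 t4)"
    using assms(1,2) unfolding equiv_via_def S1 S2 red_id_eq_form_mat congruence_form_mat l_def by simp_all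
  have det: "s1*s4 - s2*s3 = 1" "t1*t4 - t2*t3 = 1"
    using assms(1,2) unfolding equiv_via_def S1 S2 det_mat22 by simp_all
  define B' where "B' = B0 D * kron S1 S2"
  have carrier: "B' \<in> carrier_mat 2 4"
    unfolding B'_def S1 S2 B0_mult_kron by simp
  have comp: "bqf (?I s1 s3) (bqf_polar 1 l (l^2 - D) s1 s3 s2 s4) (?I s2 s4) x1 x2 *
      bqf (?I t1 t3) (bqf_polar 1 l (l^2 - D) t1 t3 t2 t4) (?I t2 t4) y1 y2 =
      ?I (bilin B' 0 x1 x2 y1 y2) (bilin B' 1 x1 x2 y1 y2)" for x1 x2 y1 y2
    unfolding bqf_linear_substitution[symmetric] bqf_red_id_mult B'_def S1 S2 B0_mult_kron l_def
    by (simp add: bilin_def algebra_simps)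
  have "minor2 B' 0 1 = ?I s1 s3 * (t1*t4 - t2*t3)" "minor2 B' 0 2 = ?I t1 t3 * (s1*s4 - s2*s3)"
    unfolding B'_def S1 S2 B0_mult_kron l_def
    by (simp_all add: minor2_def bqf_def power2_eq_square algebra_simps)
  then have minors: "minor2 B' 0 1 = ?I s1 s3" "minor2 B' 0 2 = ?I t1 t3"
    using det by simp_all
  have "?I s1 s3 \<noteq> 0" "?I t1 t3 \<noteq> 0"
    using assms(3,4) unfolding Q1 Q2 by simp_all
  then show ?thesis
    unfolding Q1 Q2 red_id_eq_form_mat oriented_composition_form_mat B'_def[symmetric] l_def[symmetric]
    using carrier comp minors by (auto simp: zero_less_mult_iff linorder_neq_iff)
qed

theorem lemma6p2:
  fixes D :: int and Q1 Q2 Q3 S1 S2 B :: "int mat"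
  assumes "D > 0" and "\<not> (\<exists>k::int. D = k^2)"
    and "is_pp_form D Q1" and "is_pp_form D Q2" and "is_pp_form D Q3"
    and "equiv_via (red_id D) Q1 S1" and "equiv_via (red_id D) Q2 S2"
    and "compose_via Q1 Q2 Q3 B"
  shows "\<exists>S3. equiv_via (red_id D) Q3 S3 \<and> S3 * B = B0 D * kron S1 S2"
proof -
  have forms: "is_form D Q1" "is_form D Q2" "is_form D Q3"
    using assms(3-5) by (simp_all add: is_form_if_is_pp_form)
  then have "Q1 $$ (0, 0) \<noteq> 0" "Q2 $$ (0, 0) \<noteq> 0"
    using first_coeff_nonzero assms(2) by blast+
  then have "oriented_composition Q1 Q2 (red_id D) (B0 D * kron S1 S2)"
    using oriented_composition_B0_kron assms(6,7) by blast
  then show ?thesis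
    using compose_via_unique[OF assms(8) _ forms is_form_red_id] assms(1) by simp
qed

end
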